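(* The rule MaxHam satisfies antipodal strategyproofness and participation.
   Context: An agenda is a finite nonempty list $\Phi=(\phi_1,\dots,\phi_m)$ of propositional formulas; a judgment is $J\in\{0,1\}^m$; the antipodal judgment $\overline{J}$ accepts exactly the issues rejected by $J$. $\mathcal{J}(\Phi)\subseteq\{0,1\}^m$ is the nonempty set of admissible judgments. A profile for a finite set of agents $N$ is $\mathbf{P}=(J_1,\dots,J_n)\in\mathcal{J}(\Phi)^n$; $\mathbf{P}_{-i}$ removes agent $i$, $(\mathbf{P}_{-i},J)$ replaces $i$'s judgment by $J$. Hamming distance $H(J,J')=\sum_k|J(\phi_k)-J'(\phi_k)|$. $\mathrm{MaxHam}(\mathbf{P})=\arg\min_{J\in\mathcal{J}(\Phi)}\max_{i\in N}H(J_i,J)$. Agent $i$ with truthful $J_i$: $J\succeq_i J'$ iff $H(J_i,J)\le H(J_i,J')$. Set preferences $\mathrel{\mathring{\succeq}}_i$ (strict part $\mathrel{\mathring{\succ}}_i$) satisfy (R1) $J\succeq_i J'$ iff $\{J\}\mathrel{\mathring{\succeq}}_i\{J'\}$, and (R2) $X\mathrel{\mathring{\succ}}_i Y$ implies there exist $J\in X$, $J'\in Y$ with $J\succ_i J'$ and $\{J,J'\}\not\subseteq X\cap Y$. Participation: no $\mathbf{P}$, $i$ with $F(\mathbf{P}_{-i})\mathrel{\mathring{\succ}}_i F(\mathbf{P})$. Antipodal strategyproofness: no $\mathbf{P}$, $i$ with $F(\mathbf{P}_{-i},\overline{J_i})\mathrel{\mathring{\succ}}_i F(\mathbf{P})$.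 *)

theory Defs
  imports Main
begin

text \<open>Judgments over an agenda of m issues are boolean lists of length m
  (entry k = acceptance of issue k). The admissible set J(Phi) is an arbitrary
  nonempty set of such lists.\<close>

type_synonym jdg = "bool list"

definition judgments :: "nat \<Rightarrow> jdg set" where
  "judgments m = {J. length J = m}"

definition antipodal :: "jdg \<Rightarrow> jdg" where
  "antipodal J = map Not J"

definition hamming :: "nat \<Rightarrow> jdg \<Rightarrow> jdg \<Rightarrow> nat" where
  "hamming m J J' = card {k. k < m \<and> J ! k \<noteq> J' ! k}"

definition is_profile :: "jdg set \<Rightarrow> 'a set \<Rightarrow> ('a \<Rightarrow> jdg) \<Rightarrow> bool" where
  "is_profile Adm N P \<longleftrightarrow> finite N \<and> (\<forall>i\<in>N. P i \<in> Adm)"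

text \<open>Maximal distance of J to the judgments of the agents in N
  (0 for the empty agent set, via Sup on nat).\<close>
definition maxdist :: "nat \<Rightarrow> 'a set \<Rightarrow> ('a \<Rightarrow> jdg) \<Rightarrow> jdg \<Rightarrow> nat" where
  "maxdist m N P J = Sup ((\<lambda>i. hamming m (P i) J) ` N)"

definition MaxHam :: "nat \<Rightarrow> jdg set \<Rightarrow> 'a set \<Rightarrow> ('a \<Rightarrow> jdg) \<Rightarrow> jdg set" where
  "MaxHam m Adm N P = {J \<in> Adm. \<forall>J'\<in>Adm. maxdist m N P J \<le> maxdist m N P J'}"

definition strict_part :: "('b \<Rightarrow> 'b \<Rightarrow> bool) \<Rightarrow> 'b \<Rightarrow> 'b \<Rightarrow> bool" where
  "strict_part R x y \<longleftrightarrow> R x y \<and> \<not> R y x"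

definition set_extension :: "nat \<Rightarrow> jdg \<Rightarrow> (jdg set \<Rightarrow> jdg set \<Rightarrow> bool) \<Rightarrow> bool" where
  "set_extension m Ji R \<longleftrightarrow>
     (\<forall>J\<in>judgments m. \<forall>J'\<in>judgments m.
        hamming m Ji J \<le> hamming m Ji J' \<longleftrightarrow> R {J} {J'}) \<and>
     (\<forall>X Y. X \<subseteq> judgments m \<longrightarrow> Y \<subseteq> judgments m \<longrightarrow> strict_part R X Y \<longrightarrow>
        (\<exists>J\<in>X. \<exists>J'\<in>Y. hamming m Ji J < hamming m Ji J' \<and> \<not> {J, J'} \<subseteq> X \<inter> Y))"


definition participation :: "nat \<Rightarrow> jdg set \<Rightarrow> ('a set \<Rightarrow> ('a \<Rightarrow> jdg) \<Rightarrow> jdg set) \<Rightarrow> bool" where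
  "participation m Adm F \<longleftrightarrow>
     (\<forall>N P i R. is_profile Adm N P \<longrightarrow> i \<in> N \<longrightarrow> set_extension m (P i) R \<longrightarrow>
        \<not> strict_part R (F (N - {i}) P) (F N P))"

definition antipodal_strategyproof :: "nat \<Rightarrow> jdg set \<Rightarrow> ('a set \<Rightarrow> ('a \<Rightarrow> jdg) \<Rightarrow> jdg set) \<Rightarrow> bool" where
  "antipodal_strategyproof m Adm F \<longleftrightarrow>
     (\<forall>N P i R. is_profile Adm N P \<longrightarrow> i \<in> N \<longrightarrow> antipodal (P i) \<in> Adm \<longrightarrow>
        set_extension m (P i) R \<longrightarrow>
        \<not> strict_part R (F N (P(i := antipodal (P i)))) (F N P))"

end

theory Submission
  imports Defs
begin

text \<open>Removing agent i, or letting i report the antipodal judgment, changes the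
  objective of MaxHam only in the i-th term of the maximum: with
  a = maxdist over the other agents and h = distance to i's true judgment, the
  objectives are a, max a h and max a (m - h). If the set preference of i
  strictly preferred the manipulated outcome X to the truthful outcome Y, (R2)
  would provide J in X and J' in Y with h J < h J' not both in X and Y. But an
  elementary comparison of the three objectives shows that such J and J' are
  optimal for both, so they lie in both outcomes.\<close>

definition argmin_on :: "'b set \<Rightarrow> ('b \<Rightarrow> 'c::linorder) \<Rightarrow> 'b set" where
  "argmin_on A f = {x \<in> A. \<forall>y\<in>A. f x \<le> f y}"

lemma MaxHam_eq_argmin_on: "MaxHam m Adm N P = argmin_on Adm (maxdist m N P)"
  by (simp add: MaxHam_def argmin_on_def)

lemma argmin_on_subset: "argmin_on A f \<subseteq> A"
  by (auto simp: argmin_on_def)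

lemma argmin_on_le: "x \<in> argmin_on A f \<Longrightarrow> y \<in> A \<Longrightarrow> f x \<le> f y"
  by (simp add: argmin_on_def)

lemma argmin_onI_le_argmin:
  "x \<in> A \<Longrightarrow> y \<in> argmin_on A f \<Longrightarrow> f x \<le> f y \<Longrightarrow> x \<in> argmin_on A f"
  by (auto simp: argmin_on_def)

lemma argmin_on_max_drop:
  fixes a h :: "'b \<Rightarrow> 'c::linorder"
  assumes J: "J \<in> argmin_on A a"
    and J': "J' \<in> argmin_on A (\<lambda>K. max (a K) (h K))"
    and closer: "h J < h J'"
  shows "J \<in> argmin_on A (\<lambda>K. max (a K) (h K)) \<and> J' \<in> argmin_on A a"
proof -
  have inA: "J \<in> A" "J' \<in> A"
    using subsetD[OF argmin_on_subset J] subsetD[OF argmin_on_subset J'] .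
  have "a J \<le> a J'" "max (a J') (h J') \<le> max (a J) (h J)"
    using argmin_on_le[OF J inA(2)] argmin_on_le[OF J' inA(1)] .
  with closer have "max (a J) (h J) \<le> max (a J') (h J')" "a J' \<le> a J"
    by (auto simp: max_def split: if_splits)
  then show ?thesis
    using argmin_onI_le_argmin[OF inA(1) J'] argmin_onI_le_argmin[OF inA(2) J] by simp
qed

lemma argmin_on_max_swap:
  fixes a g h :: "'b \<Rightarrow> 'c::linorder"
  assumes J: "J \<in> argmin_on A (\<lambda>K. max (a K) (g K))"
    and J': "J' \<in> argmin_on A (\<lambda>K. max (a K) (h K))"
    and closer: "h J < h J'" and farther: "g J' < g J"
  shows "J \<in> argmin_on A (\<lambda>K. max (a K) (h K)) \<and> J' \<in> argmin_on A (\<lambda>K. max (a K) (g K))"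
proof -
  have inA: "J \<in> A" "J' \<in> A"
    using subsetD[OF argmin_on_subset J] subsetD[OF argmin_on_subset J'] .
  have "max (a J) (g J) \<le> max (a J') (g J')" "max (a J') (h J') \<le> max (a J) (h J)"
    using argmin_on_le[OF J inA(2)] argmin_on_le[OF J' inA(1)] .
  with closer farther have "g J \<le> a J'" "h J' \<le> a J" "a J = a J'"
    by (auto simp: max_def split: if_splits)
  with closer farther have "max (a J) (h J) \<le> max (a J') (h J')"
      "max (a J') (g J') \<le> max (a J) (g J)"
    by (auto simp: max_def split: if_splits)
  then show ?thesis
    using argmin_onI_le_argmin[OF inA(1) J'] argmin_onI_le_argmin[OF inA(2) J] by simp
qed

lemma set_extension_not_strict_part:
  assumes R: "set_extension m Ji R"
    and X: "X \<subseteq> judgments m" and Y: "Y \<subseteq> judgments m"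
    and closed: "\<And>J J'. J \<in> X \<Longrightarrow> J' \<in> Y \<Longrightarrow> hamming m Ji J < hamming m Ji J' \<Longrightarrow>
                   J \<in> Y \<and> J' \<in> X"
  shows "\<not> strict_part R X Y"
proof
  assume "strict_part R X Y"
  with R X Y obtain J J' where "J \<in> X" "J' \<in> Y" "hamming m Ji J < hamming m Ji J'"
    and "\<not> {J, J'} \<subseteq> X \<inter> Y"
    unfolding set_extension_def by blast
  with closed show False
    by blast
qed

lemma hamming_le: "hamming m J J' \<le> m"
proof -
  have "{k. k < m \<and> J ! k \<noteq> J' ! k} \<subseteq> {..<m}"
    by auto
  then show ?thesis
    unfolding hamming_def by (metis card_lessThan card_mono finite_lessThan)
qed

lemma hamming_antipodal:
  assumes "length J = m"
  shows "hamming m (antipodal J) J' = m - hamming m J J'"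
proof -
  have "{k. k < m \<and> antipodal J ! k \<noteq> J' ! k} = {..<m} - {k. k < m \<and> J ! k \<noteq> J' ! k}"
    using assms by (auto simp: antipodal_def)
  then show ?thesis
    unfolding hamming_def by (simp add: card_Diff_subset subset_eq)
qed

lemma maxdist_remove:
  assumes "finite N" "i \<in> N"
  shows "maxdist m N P J = max (maxdist m (N - {i}) P J) (hamming m (P i) J)"
proof -
  have "N = insert i (N - {i})"
    using assms(2) by blast
  then have "(\<lambda>k. hamming m (P k) J) ` N =
      insert (hamming m (P i) J) ((\<lambda>k. hamming m (P k) J) ` (N - {i}))"
    by (metis image_insert)
  then show ?thesis
    unfolding maxdist_def using assms
    by (cases "N = {i}") (auto simp: Sup_insert_finite max.commute)
qed

lemma maxdist_fun_upd_outside: "i \<notin> N \<Longrightarrow> maxdist m N (P(i := J)) = maxdist m N P"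
  unfolding maxdist_def by (auto intro!: arg_cong[where f = Sup] image_cong)

lemma argmin_on_judgments:
  "Adm \<subseteq> judgments m \<Longrightarrow> argmin_on Adm f \<subseteq> judgments m"
  by (rule order_trans[OF argmin_on_subset])

theorem MaxHam_participation:
  assumes Adm: "Adm \<subseteq> judgments m"
  shows "participation m Adm (MaxHam m Adm)"
  unfolding participation_def
proof (intro allI impI)
  fix N :: "'a set" and P i R
  assume "is_profile Adm N P" and i: "i \<in> N" and R: "set_extension m (P i) R"
  then have "finite N"
    by (simp add: is_profile_def)
  then have split: "maxdist m N P = (\<lambda>K. max (maxdist m (N - {i}) P K) (hamming m (P i) K))"
    using i by (intro ext maxdist_remove)
  show "\<not> strict_part R (MaxHam m Adm (N - {i}) P) (MaxHam m Adm N P)"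
    unfolding MaxHam_eq_argmin_on split
    by (rule set_extension_not_strict_part[OF R argmin_on_judgments[OF Adm] argmin_on_judgments[OF Adm]])
      (rule argmin_on_max_drop)
qed

theorem MaxHam_antipodal_strategyproof:
  assumes Adm: "Adm \<subseteq> judgments m"
  shows "antipodal_strategyproof m Adm (MaxHam m Adm)"
  unfolding antipodal_strategyproof_def
proof (intro allI impI)
  fix N :: "'a set" and P i R
  assume prof: "is_profile Adm N P" and i: "i \<in> N" and R: "set_extension m (P i) R"
  define a where "a = maxdist m (N - {i}) P"
  define h where "h = hamming m (P i)"
  have fin: "finite N" and len: "length (P i) = m"
    using prof i Adm by (auto simp: is_profile_def judgments_def)
  have split_antipodal: "maxdist m N (P(i := antipodal (P i))) = (\<lambda>K. max (a K) (m - h K))"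
    using maxdist_remove[OF fin i, of m "P(i := antipodal (P i))"]
    by (simp add: fun_eq_iff a_def h_def maxdist_fun_upd_outside hamming_antipodal[OF len])
  have split: "maxdist m N P = (\<lambda>K. max (a K) (h K))"
    using fin i by (simp add: fun_eq_iff a_def h_def maxdist_remove)
  show "\<not> strict_part R (MaxHam m Adm N (P(i := antipodal (P i)))) (MaxHam m Adm N P)"
    unfolding MaxHam_eq_argmin_on split split_antipodal
  proof (rule set_extension_not_strict_part[OF R argmin_on_judgments[OF Adm] argmin_on_judgments[OF Adm]])
    fix J J'
    assume J: "J \<in> argmin_on Adm (\<lambda>K. max (a K) (m - h K))"
      and J': "J' \<in> argmin_on Adm (\<lambda>K. max (a K) (h K))"
      and "hamming m (P i) J < hamming m (P i) J'"
    then have closer: "h J < h J'"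
      by (simp add: h_def)
    then have "m - h J' < m - h J"
      using hamming_le[of m "P i" J'] by (simp add: h_def)
    with J J' closer show "J \<in> argmin_on Adm (\<lambda>K. max (a K) (h K)) \<and>
        J' \<in> argmin_on Adm (\<lambda>K. max (a K) (m - h K))"
      by (rule argmin_on_max_swap)
  qed
qed

theorem corollary1:
  fixes m :: nat and Adm :: "jdg set"
  assumes "0 < m" and "Adm \<noteq> {}" and "Adm \<subseteq> judgments m"
  shows "antipodal_strategyproof m Adm (MaxHam m Adm :: 'a set \<Rightarrow> ('a \<Rightarrow> jdg) \<Rightarrow> jdg set) \<and>
         participation m Adm (MaxHam m Adm :: 'a set \<Rightarrow> ('a \<Rightarrow> jdg) \<Rightarrow> jdg set)"
  using MaxHam_antipodal_strategyproof MaxHam_participation assms(3) by blast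

end
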